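(* Let $n\ge1$, let $G^\star=([n],E^\star)$ be a directed graph (directed cycles allowed), let $t\ge1$ and let $(a_0,a_1,\dots,a_{t+1})\in[n]^{t+2}$ be such that $a_i$ and $a_{i+1}$ are $p$-adjacent in $G^\star$ for all $i\in\{0,\dots,t\}$, and $a_i$ and $a_j$ are not $p$-adjacent in $G^\star$ for all $i\in\{2,\dots,t+1\}$ and $j\in\{0,\dots,i-2\}$. Then at least one of the following holds: (1) each of $a_1,\dots,a_t$ is an ancestor of $a_0$ or of $a_{t+1}$ in $G^\star$; or (2) there exist $j,\ell\in\{1,\dots,t\}$ with $j\le\ell$ such that $(a_{j-1},a_j,a_{j+1})$ and $(a_{\ell-1},a_\ell,a_{\ell+1})$ are mutually exclusive with respect to the uncovered itinerary $(a_{j-1},a_j,\dots,a_{\ell+1})$ in $G^\star$.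
   Context: In a directed graph $G$, $a$ is an ancestor of $b$ if $a=b$ or there is a directed path from $a$ to $b$. Distinct vertices $a,b$ are $p$-adjacent in $G$ if there is an edge between them (in either direction), or $a$ and $b$ have a common child in $G$ that is an ancestor of $a$ or of $b$. For $s\ge1$ and vertices $b_0,b_1,\dots,b_{s+1}$, the triples $(b_0,b_1,b_2)$ and $(b_{s-1},b_s,b_{s+1})$ are mutually exclusive with respect to the uncovered itinerary $(b_0,\dots,b_{s+1})$ in $G$ if: $b_i$ and $b_{i-1}$ are $p$-adjacent for all $i\in\{1,\dots,s+1\}$; $b_i$ and $b_j$ are not $p$-adjacent for all $i\in\{2,\dots,s+1\}$, $j\in\{0,\dots,i-2\}$; $b_i$ is an ancestor of $b_{i+1}$ for all $i\in\{1,\dots,s-1\}$; $b_i$ is an ancestor of $b_{i-1}$ for all $i\in\{2,\dots,s\}$; and $b_1$ is an ancestor of neither $b_0$ nor $b_{s+1}$. *)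

theory Defs
  imports Main
begin

definition ancestor :: "('a \<times> 'a) set \<Rightarrow> 'a \<Rightarrow> 'a \<Rightarrow> bool" where
  "ancestor E a b \<longleftrightarrow> a = b \<or> (a, b) \<in> E\<^sup>+"

definition p_adjacent :: "('a \<times> 'a) set \<Rightarrow> 'a \<Rightarrow> 'a \<Rightarrow> bool" where
  "p_adjacent E a b \<longleftrightarrow> a \<noteq> b \<and>
     ((a, b) \<in> E \<or> (b, a) \<in> E \<or>
      (\<exists>c. (a, c) \<in> E \<and> (b, c) \<in> E \<and> (ancestor E c a \<or> ancestor E c b)))"

text \<open>The triples (b 0, b 1, b 2) and (b (s-1), b s, b (s+1)) are mutually exclusive
  w.r.t. the uncovered itinerary (b 0, ..., b (s+1)).\<close>
definition mutually_exclusive :: "('a \<times> 'a) set \<Rightarrow> (nat \<Rightarrow> 'a) \<Rightarrow> nat \<Rightarrow> bool" where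
  "mutually_exclusive E b s \<longleftrightarrow> s \<ge> 1 \<and>
     (\<forall>i\<in>{1..s+1}. p_adjacent E (b i) (b (i - 1))) \<and>
     (\<forall>i\<in>{2..s+1}. \<forall>j\<in>{0..i-2}. \<not> p_adjacent E (b i) (b j)) \<and>
     (\<forall>i\<in>{1..s-1}. ancestor E (b i) (b (i + 1))) \<and>
     (\<forall>i\<in>{2..s}. ancestor E (b i) (b (i - 1))) \<and>
     \<not> ancestor E (b 1) (b 0) \<and> \<not> ancestor E (b 1) (b (s + 1))"

end

theory Submission
  imports Defs
begin

text \<open>Pick an index \<open>i\<close> whose vertex is an ancestor of neither endpoint. Among the vertices of the
  itinerary reachable from \<open>a i\<close> there is one, \<open>a y\<close>, reaching as few itinerary vertices as possible;
  everything it reaches reaches it back, so the itinerary vertices reachable from \<open>a y\<close> form a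
  strongly connected class avoiding both endpoints. The maximal run of consecutive indices
  around \<open>y\<close> inside this class, together with its two neighbours outside it, is the required
  pair of mutually exclusive triples.\<close>

lemma ancestor_iff_rtrancl: "ancestor E a b \<longleftrightarrow> (a, b) \<in> E\<^sup>*"
  by (auto simp: ancestor_def rtrancl_eq_or_trancl)

lemma ancestor_refl: "ancestor E a a"
  by (simp add: ancestor_def)

lemma ancestor_trans: "ancestor E a b \<Longrightarrow> ancestor E b c \<Longrightarrow> ancestor E a c"
  by (simp add: ancestor_iff_rtrancl)

lemma p_adjacent_sym: "p_adjacent E a b \<Longrightarrow> p_adjacent E b a"
  unfolding p_adjacent_def by blast

lemma finite_preorder_reaches_terminal:
  assumes "finite S" "x \<in> S" "reflp R" "transp R"
  shows "\<exists>y\<in>S. R x y \<and> (\<forall>z\<in>S. R y z \<longrightarrow> R z y)"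
proof -
  define up where "up y = {w \<in> S. R y w}" for y
  obtain y where y: "y \<in> S \<and> R x y"
    and y_min: "\<And>z. z \<in> S \<and> R x z \<Longrightarrow> card (up y) \<le> card (up z)"
    using ex_has_least_nat[of "\<lambda>y. y \<in> S \<and> R x y" x "\<lambda>y. card (up y)"] assms(2,3)
    by (auto dest: reflpD)
  have "R z y" if "z \<in> S" "R y z" for z
  proof -
    have "up z \<subseteq> up y"
      using that assms(4) unfolding up_def by (auto dest: transpD)
    moreover have "card (up y) \<le> card (up z)"
      using y_min that y assms(4) by (blast dest: transpD)
    ultimately have "up z = up y"
      using assms(1) by (intro card_seteq) (auto simp: up_def)
    then show ?thesis
      using y assms(3) unfolding up_def by (auto dest: reflpD)
  qed
  then show ?thesis
    using y by blast
qed

lemma maximal_run_around: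
  fixes K :: "nat set"
  assumes "y \<in> K" "lo \<notin> K" "lo \<le> y" "hi \<notin> K" "y \<le> hi"
  shows "\<exists>p q. lo \<le> p \<and> p < y \<and> y < q \<and> q \<le> hi \<and> p \<notin> K \<and> q \<notin> K \<and> {p<..<q} \<subseteq> K"
proof -
  define L where "L = {k. lo \<le> k \<and> k \<le> y \<and> k \<notin> K}"
  define U where "U = {k. y \<le> k \<and> k \<le> hi \<and> k \<notin> K}"
  have L: "finite L" "lo \<in> L" and U: "finite U" "hi \<in> U"
    using assms by (auto simp: L_def U_def)
  have "Max L \<in> L" "Min U \<in> U"
    using L U by (auto intro: Max_in Min_in)
  then have "lo \<le> Max L" "Max L < y" "Max L \<notin> K" "y < Min U" "Min U \<le> hi" "Min U \<notin> K"
    using assms(1) by (auto simp: L_def U_def le_less)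
  moreover have "{Max L<..<Min U} \<subseteq> K"
  proof
    fix k assume k: "k \<in> {Max L<..<Min U}"
    have "lo \<le> k"
      using Max_ge[OF L] k by simp
    moreover have "k \<le> hi"
      using Min_le[OF U] k by simp
    ultimately have "k \<notin> K \<Longrightarrow> k \<in> L \<or> k \<in> U"
      by (auto simp: L_def U_def)
    then show "k \<in> K"
      using Max_ge[OF L(1), of k] Min_le[OF U(1), of k] k by auto
  qed
  ultimately show ?thesis
    by blast
qed

definition uncovered_itinerary :: "('a \<times> 'a) set \<Rightarrow> (nat \<Rightarrow> 'a) \<Rightarrow> nat \<Rightarrow> bool" where
  "uncovered_itinerary E b m \<longleftrightarrow>
     (\<forall>i<m. p_adjacent E (b i) (b (Suc i))) \<and>
     (\<forall>i\<le>m. \<forall>j. j + 2 \<le> i \<longrightarrow> \<not> p_adjacent E (b i) (b j))"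

lemma uncovered_itineraryI:
  assumes "\<forall>i\<in>{0..m}. p_adjacent E (b i) (b (i + 1))"
    and "\<forall>i\<in>{2..m + 1}. \<forall>j\<in>{0..i - 2}. \<not> p_adjacent E (b i) (b j)"
  shows "uncovered_itinerary E b (m + 1)"
  unfolding uncovered_itinerary_def
proof (intro conjI allI impI)
  fix i assume "i < m + 1"
  then show "p_adjacent E (b i) (b (Suc i))"
    using assms(1) by simp
next
  fix i j assume "i \<le> m + 1" "j + 2 \<le> i"
  then show "\<not> p_adjacent E (b i) (b j)"
    using assms(2) by auto
qed

lemma uncovered_itinerary_shift:
  assumes "uncovered_itinerary E b m" "p + s \<le> m"
  shows "uncovered_itinerary E (\<lambda>i. b (p + i)) s"
  using assms unfolding uncovered_itinerary_def
  by (auto dest: spec[of _ "p + _"])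

lemma mutually_exclusiveI:
  assumes "1 \<le> s" "uncovered_itinerary E b (s + 1)"
    and "\<And>i k. i \<in> {1..s} \<Longrightarrow> k \<in> {1..s} \<Longrightarrow> ancestor E (b i) (b k)"
    and "\<not> ancestor E (b 1) (b 0)" "\<not> ancestor E (b 1) (b (s + 1))"
  shows "mutually_exclusive E b s"
  unfolding mutually_exclusive_def
proof (intro conjI ballI)
  fix i assume "i \<in> {1..s + 1}"
  then show "p_adjacent E (b i) (b (i - 1))"
    using assms(2) unfolding uncovered_itinerary_def
    by (auto intro: p_adjacent_sym dest!: spec[of _ "i - 1"])
next
  fix i j assume "i \<in> {2..s + 1}" "j \<in> {0..i - 2}"
  then show "\<not> p_adjacent E (b i) (b j)"
    using assms(2) unfolding uncovered_itinerary_def by auto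
next
  fix i assume "i \<in> {2..s}"
  moreover have "i - 1 \<in> {1..s}"
    using \<open>i \<in> {2..s}\<close> by auto
  ultimately show "ancestor E (b i) (b (i - 1))"
    using assms(3) by simp
qed (use assms in auto)

lemma strongly_connected_ancestor_run:
  fixes a :: "nat \<Rightarrow> 'a"
  assumes "i \<le> m" "\<not> ancestor E (a i) (a 0)" "\<not> ancestor E (a i) (a m)"
  obtains p q where "p + 1 < q" "q \<le> m"
    "\<And>k l. k \<in> {p<..<q} \<Longrightarrow> l \<in> {p<..<q} \<Longrightarrow> ancestor E (a k) (a l)"
    "\<not> ancestor E (a (p + 1)) (a p)" "\<not> ancestor E (a (p + 1)) (a q)"
proof -
  let ?R = "\<lambda>k l. ancestor E (a k) (a l)"
  have "\<exists>y\<in>{0..m}. ?R i y \<and> (\<forall>z\<in>{0..m}. ?R y z \<longrightarrow> ?R z y)"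
    using assms(1) by (intro finite_preorder_reaches_terminal)
      (auto intro!: reflpI transpI ancestor_refl elim: ancestor_trans)
  then obtain y where y: "y \<in> {0..m}" "?R i y"
    and terminal: "\<forall>z\<in>{0..m}. ?R y z \<longrightarrow> ?R z y"
    by blast
  define K where "K = {k. ?R y k}"
  have "y \<in> K" "0 \<notin> K" "m \<notin> K"
    using assms(2,3) y(2) unfolding K_def by (auto intro: ancestor_refl dest: ancestor_trans)
  then obtain p q where pq: "p < y" "y < q" "q \<le> m" "p \<notin> K" "q \<notin> K" "{p<..<q} \<subseteq> K"
    using maximal_run_around[of y K 0 m] y(1) by auto
  show thesis
  proof
    show "p + 1 < q" "q \<le> m"
      using pq(1-3) by simp_all
    show "?R k l" if "k \<in> {p<..<q}" "l \<in> {p<..<q}" for k l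
    proof -
      have "k \<in> {0..m}" "?R y k" "?R y l"
        using that pq(3,6) unfolding K_def by auto
      then show ?thesis
        using terminal by (blast intro: ancestor_trans)
    qed
    have "?R y (p + 1)"
      using pq(1,2,6) unfolding K_def by (simp add: subset_eq)
    then show "\<not> ?R (p + 1) p" "\<not> ?R (p + 1) q"
      using pq(4,5) unfolding K_def by (auto dest: ancestor_trans)
  qed
qed

theorem lemma3p12:
  fixes n t :: nat and E :: "(nat \<times> nat) set" and a :: "nat \<Rightarrow> nat"
  assumes "n \<ge> 1"
    and "E \<subseteq> {1..n} \<times> {1..n}"
    and "t \<ge> 1"
    and "\<forall>i\<in>{0..t+1}. a i \<in> {1..n}"
    and "\<forall>i\<in>{0..t}. p_adjacent E (a i) (a (i + 1))"
    and "\<forall>i\<in>{2..t+1}. \<forall>j\<in>{0..i-2}. \<not> p_adjacent E (a i) (a j)"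
  shows "(\<forall>i\<in>{1..t}. ancestor E (a i) (a 0) \<or> ancestor E (a i) (a (t + 1))) \<or>
         (\<exists>j\<in>{1..t}. \<exists>l\<in>{1..t}. j \<le> l \<and>
            mutually_exclusive E (\<lambda>i. a (j - 1 + i)) (l - j + 1))"
proof (cases "\<forall>i\<in>{1..t}. ancestor E (a i) (a 0) \<or> ancestor E (a i) (a (t + 1))")
  case False
  then obtain i where i: "i \<in> {1..t}" "\<not> ancestor E (a i) (a 0)" "\<not> ancestor E (a i) (a (t + 1))"
    by blast
  obtain p q where pq: "p + 1 < q" "q \<le> t + 1"
    "\<And>k l. k \<in> {p<..<q} \<Longrightarrow> l \<in> {p<..<q} \<Longrightarrow> ancestor E (a k) (a l)"
    "\<not> ancestor E (a (p + 1)) (a p)" "\<not> ancestor E (a (p + 1)) (a q)"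
    by (rule strongly_connected_ancestor_run[of i "t + 1"]) (use i in auto)
  have "uncovered_itinerary E a (t + 1)"
    using assms(5,6) by (rule uncovered_itineraryI)
  then have "mutually_exclusive E (\<lambda>k. a (p + k)) (q - p - 1)"
    using pq by (intro mutually_exclusiveI uncovered_itinerary_shift) auto
  moreover have "p + 1 \<in> {1..t}" "q - 1 \<in> {1..t}" "p + 1 \<le> q - 1" "q - 1 - (p + 1) + 1 = q - p - 1"
    using pq(1,2) by auto
  ultimately show ?thesis
    by force
qed simp

end
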